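(* Consider the following setting. Let $\mathcal{Z}=\mathcal{Z}_1\times\cdots\times\mathcal{Z}_N\subset\mathbb{R}^n$ be a product of nonempty convex compact sets, and for each $i$ let $C_i:\mathcal{Z}_i\to\mathbb{R}$ be twice differentiable with $\nabla^2 C_i(z_i)\succeq\sigma_c I$ for some $\sigma_c>0$ and with Lipschitz continuous gradient on $\mathcal{Z}_i$. Let $g(z)=Rz+g_0$ be an affine map $\mathbb{R}^n\to\mathbb{R}^m$ with $\|R\|_F\le\sigma_g$, $\sigma_g>0$, and assume the convex problem $\min\{\sum_i C_i(z_i): z\in\mathcal{Z},\ g(z)\le 0\}$ satisfies Slater's condition. Fix $\phi>0$, let $\mathcal{L}(z,\mu)=\sum_i C_i(z_i)+\mu^\top g(z)-\frac{\phi}{2}\|\mu\|^2$, $h(\mu)=\min_{z\in\mathcal{Z}}\mathcal{L}(z,\mu)$, let $(z^*,\mu^* )$ be the unique saddle point of $\mathcal{L}$ over $\mathcal{Z}\times\mathbb{R}^m_{\ge0}$, and let $\sigma_h>0$ satisfy $(\nabla h(\mu)-\nabla h(\tilde\mu))^\top(\mu-\tilde\mu)\le-\sigma_h\|\mu-\tilde\mu\|^2$ for all $\mu,\tilde\mu\ge0$. Suppose there are no discrete decision variables, so the algorithm is the deterministic dual gradient method: from $\mu(1)\ge0$, $z(k+1)=\arg\min_{z\in\mathcal{Z}}\mathcal{L}(z,\mu(k))$ and $\mu(k+1)=[\mu(k)+\varepsilon(g(z(k+1))-\phi\mu(k))]_+$. If $0<\varepsilon<2\sigma_h/(\sigma_g^2/\sigma_c+\phi)^2$,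 then $\lim_{k\to\infty}\|\mu(k)-\mu^*\|^2=0$ and $\lim_{k\to\infty}\|z(k)-z^*\|^2=0$.
   Context: $[\cdot]_+$ denotes componentwise projection onto the nonnegative orthant; $\|\cdot\|$ is the Euclidean norm and $\|\cdot\|_F$ the Frobenius norm. *)

theory Defs
  imports "HOL-Analysis.Analysis"
begin

text \<open>Block structure: coordinates of z in R^n (index type 'n) are partitioned into
  N blocks (index type 'b) by blk :: 'n => 'b.  The block R^{n_i} is identified with
  the coordinate subspace of vectors supported on the i-th block.\<close>

definition blockspace :: "('n \<Rightarrow> 'b) \<Rightarrow> 'b \<Rightarrow> (real^'n) set" where
  "blockspace blk i = {x. \<forall>j. blk j \<noteq> i \<longrightarrow> x $ j = 0}"

definition blockproj :: "('n \<Rightarrow> 'b) \<Rightarrow> 'b \<Rightarrow> real^'n \<Rightarrow> real^'n" where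
  "blockproj blk i z = (\<chi> j. if blk j = i then z $ j else 0)"

definition prodset :: "('n \<Rightarrow> 'b) \<Rightarrow> ('b \<Rightarrow> (real^'n) set) \<Rightarrow> (real^'n) set" where
  "prodset blk Zb = {z. \<forall>i. blockproj blk i z \<in> Zb i}"

definition nonneg :: "real^'m \<Rightarrow> bool" where
  "nonneg x \<longleftrightarrow> (\<forall>j. 0 \<le> x $ j)"

definition posproj :: "real^'m \<Rightarrow> real^'m" where
  "posproj x = (\<chi> j. max 0 (x $ j))"

definition frob_norm :: "real^'n^'m \<Rightarrow> real" where
  "frob_norm R = sqrt (\<Sum>i\<in>UNIV. \<Sum>j\<in>UNIV. (R $ i $ j)^2)"

definition Lagr ::
  "('b::finite \<Rightarrow> real^'n \<Rightarrow> real) \<Rightarrow> ('n \<Rightarrow> 'b) \<Rightarrow> real^'n^'m \<Rightarrow> real^'m \<Rightarrow> real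
     \<Rightarrow> real^'n \<Rightarrow> real^'m \<Rightarrow> real" where
  "Lagr C blk R g0 \<phi> z \<mu> =
     (\<Sum>i\<in>UNIV. C i (blockproj blk i z)) + \<mu> \<bullet> (R *v z + g0) - \<phi> / 2 * (norm \<mu>)^2"

end

(*
  The regularized dual function h is differentiable with gradient g(z_mu) - phi mu, where z_mu
  is the primal minimizer at mu (Danskin): h is squeezed between two quadratics touching at mu.
  Strong convexity of the costs makes mu |-> z_mu Lipschitz with constant sigma_g/sigma_c, so the
  gradient of h is Lipschitz with constant L = sigma_g^2/sigma_c + phi. The saddle multiplier mu*
  is a fixed point of the projected gradient step, and since the projection onto the orthant is
  nonexpansive, the sigma_h-strong monotonicity of the gradient gives
  |mu(k+1) - mu*|^2 <= (1 - 2 eps sigma_h + eps^2 L^2) |mu(k) - mu*|^2, a contraction for the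
  admissible step sizes. The primal iterates follow through |z(k+1) - z*| <= sigma_g/sigma_c |mu(k) - mu*|.
*)
theory Submission
  imports Defs
begin

section \<open>Strong convexity\<close>

definition strongly_convex_on :: "'a::real_normed_vector set \<Rightarrow> real \<Rightarrow> ('a \<Rightarrow> real) \<Rightarrow> bool" where
  "strongly_convex_on S \<sigma> f \<longleftrightarrow>
     (\<forall>x\<in>S. \<forall>y\<in>S. \<forall>t. 0 \<le> t \<longrightarrow> t \<le> 1 \<longrightarrow>
        f ((1 - t) *\<^sub>R x + t *\<^sub>R y)
          \<le> (1 - t) * f x + t * f y - \<sigma> / 2 * (t * (1 - t)) * (norm (x - y))^2)"

lemma strongly_convex_onD:
  assumes "strongly_convex_on S \<sigma> f" "x \<in> S" "y \<in> S" "0 \<le> t" "t \<le> 1"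
  shows "f ((1 - t) *\<^sub>R x + t *\<^sub>R y)
           \<le> (1 - t) * f x + t * f y - \<sigma> / 2 * (t * (1 - t)) * (norm (x - y))^2"
  using assms unfolding strongly_convex_on_def by blast

lemma strongly_convex_on_add_affine:
  assumes "strongly_convex_on S \<sigma> f" "linear l"
  shows "strongly_convex_on S \<sigma> (\<lambda>x. f x + l x + c)"
  unfolding strongly_convex_on_def
proof (intro ballI allI impI)
  fix x y t assume "x \<in> S" "y \<in> S" "0 \<le> (t::real)" "t \<le> 1"
  then have "f ((1 - t) *\<^sub>R x + t *\<^sub>R y)
      \<le> (1 - t) * f x + t * f y - \<sigma> / 2 * (t * (1 - t)) * (norm (x - y))^2"
    by (rule strongly_convex_onD[OF assms(1)])
  moreover have "l ((1 - t) *\<^sub>R x + t *\<^sub>R y) = (1 - t) * l x + t * l y"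
    using assms(2) by (simp add: linear_add linear_scale)
  ultimately show "f ((1 - t) *\<^sub>R x + t *\<^sub>R y) + l ((1 - t) *\<^sub>R x + t *\<^sub>R y) + c
      \<le> (1 - t) * (f x + l x + c) + t * (f y + l y + c) - \<sigma> / 2 * (t * (1 - t)) * (norm (x - y))^2"
    by (simp add: algebra_simps)
qed

text \<open>Compare the minimum with the values on the segment towards \<open>b\<close> and let the segment
  shrink.\<close>

lemma strongly_convex_on_minimizer_growth:
  assumes f: "strongly_convex_on S \<sigma> f" and S: "convex S"
    and a: "a \<in> S" and minimal: "\<And>y. y \<in> S \<Longrightarrow> f a \<le> f y" and b: "b \<in> S"
  shows "f a + \<sigma> / 2 * (norm (b - a))^2 \<le> f b"
proof -
  have approx: "f a + \<sigma> / 2 * (1 - inverse (real (Suc n))) * (norm (b - a))^2 \<le> f b" for n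
  proof -
    define t where "t = inverse (real (Suc n))"
    have t: "0 < t" "t \<le> 1" by (auto simp: t_def field_simps)
    have "f a \<le> f ((1 - t) *\<^sub>R a + t *\<^sub>R b)"
      using t S a b by (intro minimal) (simp add: convex_alt)
    also have "\<dots> \<le> (1 - t) * f a + t * f b - \<sigma> / 2 * (t * (1 - t)) * (norm (a - b))^2"
      using t by (intro strongly_convex_onD[OF f a b]) auto
    finally have "t * (f a + \<sigma> / 2 * (1 - t) * (norm (b - a))^2) \<le> t * f b"
      by (simp add: algebra_simps norm_minus_commute)
    then show ?thesis using t unfolding t_def[symmetric] by simp
  qed
  have "(\<lambda>n. f a + \<sigma> / 2 * (1 - inverse (real (Suc n))) * (norm (b - a))^2)
      \<longlonglongrightarrow> f a + \<sigma> / 2 * (1 - 0) * (norm (b - a))^2"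
    by (intro tendsto_intros LIMSEQ_inverse_real_of_nat)
  then have "f a + \<sigma> / 2 * (1 - 0) * (norm (b - a))^2 \<le> f b"
    by (rule LIMSEQ_le_const2) (use approx in auto)
  then show ?thesis by simp
qed

lemma DERIV_nonneg_within_imp_increasing:
  fixes q q' :: "real \<Rightarrow> real"
  assumes deriv: "\<And>t. t \<in> {a..b} \<Longrightarrow> (q has_real_derivative q' t) (at t within {a..b})"
    and nonneg: "\<And>t. a < t \<Longrightarrow> t < b \<Longrightarrow> 0 \<le> q' t"
    and t: "t \<in> {a..b}"
  shows "q a \<le> q t"
proof (rule DERIV_nonneg_imp_increasing_open[where f = q])
  show "a \<le> t" using t by simp
  have "continuous_on {a..b} q"
    using deriv by (rule DERIV_continuous_on)
  then show "continuous_on {a..t} q"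
    using t by (auto intro: continuous_on_subset)
next
  fix u assume u: "a < u" "u < t"
  then have "at u within {a..b} = at u"
    using t by (intro at_within_interior) auto
  then show "\<exists>y. (q has_real_derivative y) (at u) \<and> 0 \<le> y"
    using deriv[of u] nonneg[of u] u t by auto
qed

lemma has_derivative_along_segment:
  fixes f :: "'a::real_normed_vector \<Rightarrow> 'b::real_normed_vector"
  assumes S: "convex S" "x \<in> S" "y \<in> S"
    and f: "\<And>p. p \<in> S \<Longrightarrow> (f has_derivative f' p) (at p within S)"
    and t: "t \<in> {0..1}"
  shows "((\<lambda>t. f (x + t *\<^sub>R (y - x))) has_derivative
           (\<lambda>s. f' (x + t *\<^sub>R (y - x)) (s *\<^sub>R (y - x)))) (at t within {0..1})"
proof (rule has_derivative_in_compose2[OF f _ t])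
  show "(\<lambda>t. x + t *\<^sub>R (y - x)) ` {0..1} \<subseteq> S"
  proof clarify
    fix u :: real assume "u \<in> {0..1}"
    then have "(1 - u) *\<^sub>R x + u *\<^sub>R y \<in> S" using S by (simp add: convex_alt)
    then show "x + u *\<^sub>R (y - x) \<in> S" by (simp add: algebra_simps)
  qed
qed (auto intro!: derivative_eq_intros)

text \<open>Integrate the Hessian bound twice along the segment from \<open>x\<close> to \<open>y\<close>.\<close>

lemma hessian_lower_bound_imp_gradient_inequality:
  fixes f :: "'a::real_inner \<Rightarrow> real" and G :: "'a \<Rightarrow> 'a" and H :: "'a \<Rightarrow> 'a \<Rightarrow> 'a"
  assumes S: "convex S" and x: "x \<in> S" and y: "y \<in> S"
    and f: "\<And>p. p \<in> S \<Longrightarrow> (f has_derivative (\<lambda>h. G p \<bullet> h)) (at p within S)"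
    and G: "\<And>p. p \<in> S \<Longrightarrow> (G has_derivative H p) (at p within S)"
    and H: "\<And>p. p \<in> S \<Longrightarrow> \<sigma> * (norm (y - x))^2 \<le> (y - x) \<bullet> H p (y - x)"
  shows "f x + G x \<bullet> (y - x) + \<sigma> / 2 * (norm (y - x))^2 \<le> f y"
proof -
  define v where "v = y - x"
  define \<gamma> where "\<gamma> t = x + t *\<^sub>R v" for t :: real
  have \<gamma>: "\<gamma> t \<in> S" if "t \<in> {0..1}" for t
    using S x y that by (simp add: \<gamma>_def v_def convex_alt algebra_simps)
  have df: "((\<lambda>t. f (\<gamma> t)) has_real_derivative G (\<gamma> t) \<bullet> v) (at t within {0..1})"
    if "t \<in> {0..1}" for t
    using has_derivative_along_segment[OF S x y f that]
    by (simp add: has_field_derivative_def \<gamma>_def v_def mult_commute_abs)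
  have dG: "((\<lambda>t. G (\<gamma> t) \<bullet> v) has_real_derivative H (\<gamma> t) v \<bullet> v) (at t within {0..1})"
    if t: "t \<in> {0..1}" for t
  proof -
    have "linear (H (\<gamma> t))"
      using G[OF \<gamma>[OF t]] has_derivative_linear by blast
    then have "(\<lambda>s. H (\<gamma> t) (s *\<^sub>R v) \<bullet> v) = (*) (H (\<gamma> t) v \<bullet> v)"
      by (auto simp: fun_eq_iff linear_scale)
    moreover have "((\<lambda>t. G (\<gamma> t) \<bullet> v) has_derivative (\<lambda>s. H (\<gamma> t) (s *\<^sub>R v) \<bullet> v)) (at t within {0..1})"
      using has_derivative_along_segment[OF S x y G t]
      by (intro bounded_linear.has_derivative[OF bounded_linear_inner_left])
        (simp_all add: \<gamma>_def v_def)
    ultimately show ?thesis by (simp add: has_field_derivative_def)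
  qed
  define q where "q t = G (\<gamma> t) \<bullet> v - G x \<bullet> v - \<sigma> * t * (norm v)^2" for t
  have q_nonneg: "0 \<le> q t" if "t \<in> {0..1}" for t
  proof -
    have "q 0 \<le> q t"
    proof (rule DERIV_nonneg_within_imp_increasing[OF _ _ that])
      show "(q has_real_derivative H (\<gamma> s) v \<bullet> v - \<sigma> * (norm v)^2) (at s within {0..1})"
        if "s \<in> {0..1}" for s
        unfolding q_def by (rule derivative_eq_intros dG that refl | simp)+
      show "0 \<le> H (\<gamma> s) v \<bullet> v - \<sigma> * (norm v)^2" if "0 < s" "s < 1" for s
        using H[OF \<gamma>] that by (simp add: v_def inner_commute)
    qed
    then show ?thesis by (simp add: q_def \<gamma>_def)
  qed
  define r where "r t = f (\<gamma> t) - f x - t * (G x \<bullet> v) - \<sigma> / 2 * t^2 * (norm v)^2" for t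
  have "r 0 \<le> r 1"
  proof (rule DERIV_nonneg_within_imp_increasing[where q = r and q' = q and b = 1])
    show "(r has_real_derivative q t) (at t within {0..1})" if "t \<in> {0..1}" for t
      unfolding r_def q_def by (rule derivative_eq_intros df that refl | simp)+
  qed (use q_nonneg in auto)
  then show ?thesis by (simp add: r_def \<gamma>_def v_def)
qed

text \<open>Apply the gradient inequality at the convex combination \<open>c\<close> towards both end points;
  the gradient terms cancel.\<close>

lemma gradient_inequality_imp_strongly_convex_on:
  fixes f :: "'a::real_inner \<Rightarrow> real" and G :: "'a \<Rightarrow> 'a"
  assumes S: "convex S"
    and grad: "\<And>x y. x \<in> S \<Longrightarrow> y \<in> S \<Longrightarrow> f x + G x \<bullet> (y - x) + \<sigma> / 2 * (norm (y - x))^2 \<le> f y"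
  shows "strongly_convex_on S \<sigma> f"
  unfolding strongly_convex_on_def
proof (intro ballI allI impI)
  fix x y t assume x: "x \<in> S" and y: "y \<in> S" and t: "0 \<le> (t::real)" "t \<le> 1"
  define c where "c = (1 - t) *\<^sub>R x + t *\<^sub>R y"
  have "c \<in> S" using S x y t by (simp add: c_def convex_alt)
  have cx: "x - c = t *\<^sub>R (x - y)" and cy: "y - c = - ((1 - t) *\<^sub>R (x - y))"
    by (simp_all add: c_def algebra_simps)
  have "f c + t * (G c \<bullet> (x - y)) + \<sigma> / 2 * (t^2 * (norm (x - y))^2) \<le> f x"
    using grad[OF \<open>c \<in> S\<close> x] t by (simp add: cx power_mult_distrib)
  moreover have "f c - (1 - t) * (G c \<bullet> (x - y)) + \<sigma> / 2 * ((1 - t)^2 * (norm (x - y))^2) \<le> f y"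
    using grad[OF \<open>c \<in> S\<close> y] t by (simp add: cy power_mult_distrib)
  ultimately have "(1 - t) * (f c + t * (G c \<bullet> (x - y)) + \<sigma> / 2 * (t^2 * (norm (x - y))^2))
      + t * (f c - (1 - t) * (G c \<bullet> (x - y)) + \<sigma> / 2 * ((1 - t)^2 * (norm (x - y))^2))
      \<le> (1 - t) * f x + t * f y"
    using t by (intro add_mono mult_left_mono) auto
  moreover have "(1 - t) * (f c + t * (G c \<bullet> (x - y)) + \<sigma> / 2 * (t^2 * (norm (x - y))^2))
      + t * (f c - (1 - t) * (G c \<bullet> (x - y)) + \<sigma> / 2 * ((1 - t)^2 * (norm (x - y))^2))
      = f c + \<sigma> / 2 * (t * (1 - t)) * (norm (x - y))^2"
    by (simp add: field_simps power2_eq_square)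
  ultimately show "f c \<le> (1 - t) * f x + t * f y - \<sigma> / 2 * (t * (1 - t)) * (norm (x - y))^2"
    by linarith
qed

lemma hessian_lower_bound_imp_strongly_convex_on:
  fixes f :: "'a::real_inner \<Rightarrow> real" and G :: "'a \<Rightarrow> 'a" and H :: "'a \<Rightarrow> 'a \<Rightarrow> 'a"
  assumes S: "convex S"
    and f: "\<And>p. p \<in> S \<Longrightarrow> (f has_derivative (\<lambda>h. G p \<bullet> h)) (at p within S)"
    and G: "\<And>p. p \<in> S \<Longrightarrow> (G has_derivative H p) (at p within S)"
    and H: "\<And>p x y. p \<in> S \<Longrightarrow> x \<in> S \<Longrightarrow> y \<in> S \<Longrightarrow> \<sigma> * (norm (y - x))^2 \<le> (y - x) \<bullet> H p (y - x)"
  shows "strongly_convex_on S \<sigma> f"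
  using S by (rule gradient_inequality_imp_strongly_convex_on[where G = G])
    (intro hessian_lower_bound_imp_gradient_inequality[OF S _ _ f G H])

section \<open>Block-separable costs\<close>

lemma blockspace_diff: "x \<in> blockspace blk i \<Longrightarrow> y \<in> blockspace blk i \<Longrightarrow> x - y \<in> blockspace blk i"
  by (simp add: blockspace_def)

lemma linear_blockproj: "linear (blockproj blk i)"
  by (rule linearI) (simp_all add: blockproj_def vec_eq_iff)

lemma sum_norm_blockproj_squared:
  fixes w :: "real^'n" and blk :: "'n \<Rightarrow> 'b::finite"
  shows "(\<Sum>i\<in>UNIV. (norm (blockproj blk i w))^2) = (norm w)^2"
proof -
  have "(\<Sum>i\<in>UNIV. (norm (blockproj blk i w))^2)
      = (\<Sum>i\<in>UNIV. \<Sum>j\<in>UNIV. if blk j = i then (w $ j)^2 else 0)"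
    unfolding power2_norm_eq_inner inner_vec_def blockproj_def
    by (auto simp: power2_eq_square intro!: sum.cong)
  also have "\<dots> = (\<Sum>j\<in>UNIV. \<Sum>i\<in>UNIV. if blk j = i then (w $ j)^2 else 0)"
    by (rule sum.swap)
  also have "\<dots> = (norm w)^2"
    unfolding power2_norm_eq_inner inner_vec_def by (simp add: power2_eq_square)
  finally show ?thesis .
qed

lemma convex_prodset:
  assumes "\<And>i. convex (Zb i)"
  shows "convex (prodset blk Zb)"
  using assms unfolding convex_alt prodset_def
  by (simp add: linear_add[OF linear_blockproj] linear_scale[OF linear_blockproj])

lemma strongly_convex_on_prodset_sum:
  fixes blk :: "'n::finite \<Rightarrow> 'b::finite"
  assumes C: "\<And>i. strongly_convex_on (Zb i) \<sigma> (C i)"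
  shows "strongly_convex_on (prodset blk Zb) \<sigma> (\<lambda>z. \<Sum>i\<in>UNIV. C i (blockproj blk i z))"
  unfolding strongly_convex_on_def
proof (intro ballI allI impI)
  fix x y t assume x: "x \<in> prodset blk Zb" and y: "y \<in> prodset blk Zb" and t: "0 \<le> (t::real)" "t \<le> 1"
  note P = linear_add[OF linear_blockproj] linear_scale[OF linear_blockproj] linear_diff[OF linear_blockproj]
  have "(\<Sum>i\<in>UNIV. C i (blockproj blk i ((1 - t) *\<^sub>R x + t *\<^sub>R y)))
      \<le> (\<Sum>i\<in>UNIV. (1 - t) * C i (blockproj blk i x) + t * C i (blockproj blk i y)
            - \<sigma> / 2 * (t * (1 - t)) * (norm (blockproj blk i (x - y)))^2)"
    using x y t unfolding prodset_def P by (intro sum_mono strongly_convex_onD[OF C]) auto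
  also have "\<dots> = (1 - t) * (\<Sum>i\<in>UNIV. C i (blockproj blk i x)) + t * (\<Sum>i\<in>UNIV. C i (blockproj blk i y))
      - \<sigma> / 2 * (t * (1 - t)) * (\<Sum>i\<in>UNIV. (norm (blockproj blk i (x - y)))^2)"
    by (simp add: sum.distrib sum_subtractf sum_distrib_left)
  also have "\<dots> = (1 - t) * (\<Sum>i\<in>UNIV. C i (blockproj blk i x)) + t * (\<Sum>i\<in>UNIV. C i (blockproj blk i y))
      - \<sigma> / 2 * (t * (1 - t)) * (norm (x - y))^2"
    by (simp only: sum_norm_blockproj_squared)
  finally show "(\<Sum>i\<in>UNIV. C i (blockproj blk i ((1 - t) *\<^sub>R x + t *\<^sub>R y)))
      \<le> (1 - t) * (\<Sum>i\<in>UNIV. C i (blockproj blk i x)) + t * (\<Sum>i\<in>UNIV. C i (blockproj blk i y))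
        - \<sigma> / 2 * (t * (1 - t)) * (norm (x - y))^2" .
qed

lemma norm_matrix_vector_mult_le_frob_norm:
  fixes R :: "real^'n^'m"
  shows "norm (R *v w) \<le> frob_norm R * norm w"
proof -
  have "(norm (R *v w))^2 = (\<Sum>i\<in>UNIV. ((R $ i) \<bullet> w)^2)"
    by (simp add: norm_vec_def L2_set_def matrix_vector_mult_def inner_vec_def sum_nonneg)
  also have "\<dots> \<le> (\<Sum>i\<in>UNIV. (norm (R $ i))^2 * (norm w)^2)"
  proof (rule sum_mono)
    fix i
    have "\<bar>(R $ i) \<bullet> w\<bar> \<le> norm (R $ i) * norm w" by (rule Cauchy_Schwarz_ineq2)
    then have "\<bar>(R $ i) \<bullet> w\<bar>^2 \<le> (norm (R $ i) * norm w)^2" by (rule power_mono) simp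
    then show "((R $ i) \<bullet> w)^2 \<le> (norm (R $ i))^2 * (norm w)^2" by (simp add: power_mult_distrib)
  qed
  also have "\<dots> = (frob_norm R * norm w)^2"
    by (simp add: frob_norm_def power_mult_distrib sum_distrib_right norm_vec_def L2_set_def sum_nonneg)
  finally show ?thesis
    by (rule power2_le_imp_le) (auto simp: frob_norm_def intro!: mult_nonneg_nonneg sum_nonneg)
qed

section \<open>Projection onto the nonnegative orthant\<close>

lemma nonneg_posproj: "nonneg (posproj x)"
  by (simp add: nonneg_def posproj_def)

lemma norm_posproj_diff_le: "norm (posproj x - posproj y) \<le> norm (x - y)"
  by (rule norm_le_componentwise_cart) (simp add: posproj_def max_def abs_if)

text \<open>Moving a single coordinate of \<open>m\<close> to \<open>max 0 (c$j/\<phi>)\<close> gains at least \<open>\<phi>/2\<close>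
  times its squared displacement.\<close>

lemma nonneg_maximizer_eq_posproj:
  fixes c m :: "real^'m"
  assumes \<phi>: "\<phi> > 0" and m: "nonneg m"
    and maximal: "\<And>\<nu>. nonneg \<nu> \<Longrightarrow> \<nu> \<bullet> c - \<phi> / 2 * (norm \<nu>)^2 \<le> m \<bullet> c - \<phi> / 2 * (norm m)^2"
  shows "m = posproj ((1 / \<phi>) *\<^sub>R c)"
proof -
  have "m $ j = max 0 (c $ j / \<phi>)" for j
  proof -
    define p where "p = max 0 (c $ j / \<phi>)"
    define \<nu> where "\<nu> = m + axis j (p - m $ j)"
    have "nonneg \<nu>" using m by (auto simp: nonneg_def \<nu>_def axis_def p_def)
    then have "\<nu> \<bullet> c - \<phi> / 2 * (norm \<nu>)^2 \<le> m \<bullet> c - \<phi> / 2 * (norm m)^2" by (rule maximal)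
    moreover have "\<nu> \<bullet> c - \<phi> / 2 * (norm \<nu>)^2 - (m \<bullet> c - \<phi> / 2 * (norm m)^2)
        = (p - m $ j) * c $ j - \<phi> / 2 * (2 * m $ j * (p - m $ j) + (p - m $ j)^2)"
      unfolding power2_norm_eq_inner
      by (simp add: \<nu>_def inner_add_left inner_add_right inner_axis inner_axis' inner_commute
          algebra_simps power2_eq_square)
    moreover have "\<phi> / 2 * (p - m $ j)^2
        \<le> (p - m $ j) * c $ j - \<phi> / 2 * (2 * m $ j * (p - m $ j) + (p - m $ j)^2)"
    proof (cases "c $ j \<ge> 0")
      case True
      then have "c $ j = \<phi> * p" using \<phi> by (simp add: p_def max_def)
      then show ?thesis by (simp add: algebra_simps power2_eq_square)
    next
      case False
      then have "p = 0" using \<phi> by (simp add: p_def max_def zero_le_divide_iff)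
      moreover have "0 \<le> - m $ j * c $ j" using m False by (simp add: nonneg_def mult_nonneg_nonpos)
      ultimately show ?thesis by (simp add: algebra_simps power2_eq_square)
    qed
    ultimately have "\<phi> / 2 * (p - m $ j)^2 \<le> 0" by linarith
    then show ?thesis using \<phi> by (simp add: p_def mult_le_0_iff)
  qed
  then show ?thesis by (simp add: posproj_def vec_eq_iff)
qed

lemma posproj_gradient_step_fixed_point:
  assumes \<phi>: "\<phi> > 0" and \<epsilon>: "\<epsilon> > 0" and m: "m = posproj ((1 / \<phi>) *\<^sub>R c)"
  shows "posproj (m + \<epsilon> *\<^sub>R (c - \<phi> *\<^sub>R m)) = m"
proof -
  have "max 0 (m $ j + \<epsilon> * (c $ j - \<phi> * m $ j)) = m $ j" for j
  proof (cases "c $ j \<ge> 0")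
    case True
    then have "m $ j = c $ j / \<phi>" using m \<phi> by (simp add: posproj_def max_def)
    then show ?thesis using True \<phi> by simp
  next
    case False
    then have "m $ j = 0" using m \<phi> by (simp add: posproj_def max_def zero_le_divide_iff)
    then show ?thesis using False \<epsilon> by (simp add: max_def zero_le_mult_iff)
  qed
  then show ?thesis by (simp add: posproj_def vec_eq_iff)
qed

text \<open>The projection is nonexpansive; expand the square of the unprojected difference.\<close>

lemma posproj_gradient_step_contraction:
  fixes \<nu> \<mu>s d d' :: "real^'m"
  assumes fixed: "posproj (\<mu>s + \<epsilon> *\<^sub>R d') = \<mu>s"
    and mono: "(d - d') \<bullet> (\<nu> - \<mu>s) \<le> - \<sigma> * (norm (\<nu> - \<mu>s))^2"
    and lip: "norm (d - d') \<le> Lc * norm (\<nu> - \<mu>s)"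
    and \<epsilon>: "0 \<le> \<epsilon>"
  shows "(norm (posproj (\<nu> + \<epsilon> *\<^sub>R d) - \<mu>s))^2
           \<le> (1 - 2 * \<epsilon> * \<sigma> + \<epsilon>^2 * Lc^2) * (norm (\<nu> - \<mu>s))^2"
proof -
  define \<Delta> where "\<Delta> = \<nu> - \<mu>s"
  define E where "E = d - d'"
  have "norm (posproj (\<nu> + \<epsilon> *\<^sub>R d) - \<mu>s) \<le> norm (\<Delta> + \<epsilon> *\<^sub>R E)"
    using norm_posproj_diff_le[of "\<nu> + \<epsilon> *\<^sub>R d" "\<mu>s + \<epsilon> *\<^sub>R d'"]
    by (simp add: fixed \<Delta>_def E_def algebra_simps)
  then have "(norm (posproj (\<nu> + \<epsilon> *\<^sub>R d) - \<mu>s))^2 \<le> (norm (\<Delta> + \<epsilon> *\<^sub>R E))^2"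
    by (simp add: power_mono)
  also have "\<dots> = (norm \<Delta>)^2 + 2 * \<epsilon> * (E \<bullet> \<Delta>) + \<epsilon>^2 * (norm E)^2"
    unfolding power2_norm_eq_inner by (simp add: inner_add_left inner_add_right inner_commute power2_eq_square)
  also have "\<dots> \<le> (norm \<Delta>)^2 + 2 * \<epsilon> * (- \<sigma> * (norm \<Delta>)^2) + \<epsilon>^2 * (Lc^2 * (norm \<Delta>)^2)"
  proof -
    have "(norm E)^2 \<le> (Lc * norm \<Delta>)^2"
      using lip by (simp add: E_def \<Delta>_def power_mono)
    then show ?thesis
      using mono \<epsilon> unfolding E_def \<Delta>_def
      by (intro add_mono mult_left_mono) (auto simp: power_mult_distrib)
  qed
  also have "\<dots> = (1 - 2 * \<epsilon> * \<sigma> + \<epsilon>^2 * Lc^2) * (norm (\<nu> - \<mu>s))^2"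
    by (simp add: \<Delta>_def algebra_simps)
  finally show ?thesis .
qed

lemma LIMSEQ_zero_if_contracting:
  fixes x :: "nat \<Rightarrow> real"
  assumes step: "\<And>k. k \<ge> 1 \<Longrightarrow> x (Suc k) \<le> r * x k"
    and nonneg: "\<And>k. 0 \<le> x k" and r: "r < 1"
  shows "x \<longlonglongrightarrow> 0"
proof -
  define r' where "r' = max 0 r"
  have geometric: "x (Suc k) \<le> r' ^ k * x 1" for k
  proof (induction k)
    case (Suc k)
    have "x (Suc (Suc k)) \<le> r' * x (Suc k)"
      using step[of "Suc k"] nonneg[of "Suc k"] by (simp add: r'_def max_def mult_right_mono order_trans)
    also have "\<dots> \<le> r' * (r' ^ k * x 1)"
      using Suc by (simp add: r'_def mult_left_mono)
    finally show ?case by simp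
  qed simp
  have "(\<lambda>k. x (Suc k)) \<longlonglongrightarrow> 0"
  proof (rule tendsto_sandwich[OF _ _ tendsto_const])
    show "(\<lambda>k. r' ^ k * x 1) \<longlonglongrightarrow> 0"
      using r by (intro tendsto_mult_left_zero LIMSEQ_power_zero) (auto simp: r'_def)
  qed (use nonneg geometric in auto)
  then show ?thesis by (rule LIMSEQ_imp_Suc)
qed

section \<open>The regularized Lagrangian and its dual function\<close>

lemma has_derivative_at_if_quadratic_remainder:
  fixes f :: "'a::real_normed_vector \<Rightarrow> 'b::real_normed_vector"
  assumes "bounded_linear f'"
    and remainder: "\<And>y. norm (f y - f x - f' (y - x)) \<le> K * (norm (y - x))^2"
  shows "(f has_derivative f') (at x)"
  unfolding has_derivative_at_alt
proof (intro conjI allI impI)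
  fix e :: real assume e: "0 < e"
  define d where "d = e / (\<bar>K\<bar> + 1)"
  show "\<exists>d>0. \<forall>y. norm (y - x) < d \<longrightarrow> norm (f y - f x - f' (y - x)) \<le> e * norm (y - x)"
  proof (intro exI[of _ d] conjI allI impI)
    show "0 < d" using e by (simp add: d_def)
    fix y assume "norm (y - x) < d"
    then have "(\<bar>K\<bar> + 1) * norm (y - x) \<le> e"
      by (simp add: d_def pos_less_divide_eq mult.commute)
    then have "(\<bar>K\<bar> + 1) * norm (y - x) * norm (y - x) \<le> e * norm (y - x)"
      by (simp add: mult_right_mono)
    moreover have "K * (norm (y - x))^2 \<le> (\<bar>K\<bar> + 1) * norm (y - x) * norm (y - x)"
      by (simp add: power2_eq_square mult_right_mono mult.assoc)
    ultimately show "norm (f y - f x - f' (y - x)) \<le> e * norm (y - x)"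
      using remainder[of y] by linarith
  qed
qed (rule assms(1))

locale regularized_lagrangian =
  fixes F :: "real^'n::finite \<Rightarrow> real" and Z :: "(real^'n) set"
    and R :: "real^'n^'m::finite" and g0 :: "real^'m"
    and \<phi> \<sigma>c \<sigma>g :: real
  assumes convex_Z: "convex Z"
    and strongly_convex_F: "strongly_convex_on Z \<sigma>c F"
    and \<sigma>c_pos: "0 < \<sigma>c"
    and norm_R_le: "\<And>w. norm (R *v w) \<le> \<sigma>g * norm w"
    and \<phi>_pos: "0 < \<phi>"
begin

definition lagr :: "real^'n \<Rightarrow> real^'m \<Rightarrow> real" where
  "lagr z \<mu> = F z + \<mu> \<bullet> (R *v z + g0) - \<phi> / 2 * (norm \<mu>)^2"

definition dual_fun :: "real^'m \<Rightarrow> real" where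
  "dual_fun \<mu> = (INF z\<in>Z. lagr z \<mu>)"

definition is_minimizer :: "real^'n \<Rightarrow> real^'m \<Rightarrow> bool" where
  "is_minimizer a \<mu> \<longleftrightarrow> a \<in> Z \<and> (\<forall>z\<in>Z. lagr a \<mu> \<le> lagr z \<mu>)"

definition dual_grad :: "real^'n \<Rightarrow> real^'m \<Rightarrow> real^'m" where
  "dual_grad a \<mu> = R *v a + g0 - \<phi> *\<^sub>R \<mu>"

lemma \<sigma>g_nonneg: "0 \<le> \<sigma>g"
proof -
  fix i :: 'n
  have "0 \<le> norm (R *v axis i 1)" by simp
  also have "\<dots> \<le> \<sigma>g" using norm_R_le[of "axis i 1"] by simp
  finally show ?thesis .
qed

lemma lagr_diff_multiplier:
  "lagr z \<eta> - lagr z \<eta>' = (\<eta> - \<eta>') \<bullet> (R *v z + g0) - \<phi> / 2 * ((norm \<eta>)^2 - (norm \<eta>')^2)"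
  by (simp add: lagr_def algebra_simps inner_diff_left)

lemma strongly_convex_lagr: "strongly_convex_on Z \<sigma>c (\<lambda>z. lagr z \<eta>)"
proof -
  have "linear (\<lambda>z. \<eta> \<bullet> (R *v z))"
    by (rule linearI) (simp_all add: matrix_vector_right_distrib matrix_vector_mult_scaleR inner_add_right)
  then have "strongly_convex_on Z \<sigma>c (\<lambda>z. F z + \<eta> \<bullet> (R *v z) + (\<eta> \<bullet> g0 - \<phi> / 2 * (norm \<eta>)^2))"
    by (rule strongly_convex_on_add_affine[OF strongly_convex_F])
  moreover have "(\<lambda>z. F z + \<eta> \<bullet> (R *v z) + (\<eta> \<bullet> g0 - \<phi> / 2 * (norm \<eta>)^2)) = (\<lambda>z. lagr z \<eta>)"
    by (simp add: fun_eq_iff lagr_def inner_add_right)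
  ultimately show ?thesis by simp
qed

lemma minimizer_growth:
  assumes "is_minimizer a \<eta>" "b \<in> Z"
  shows "lagr a \<eta> + \<sigma>c / 2 * (norm (b - a))^2 \<le> lagr b \<eta>"
  using assms unfolding is_minimizer_def
  by (intro strongly_convex_on_minimizer_growth[OF strongly_convex_lagr convex_Z]) auto

text \<open>Adding the growth inequalities at both minimizers cancels \<open>F\<close> and leaves
  \<open>\<sigma>c \<parallel>a - b\<parallel>\<^sup>2 \<le> (\<eta> - \<eta>') \<bullet> R (b - a)\<close>.\<close>

lemma minimizer_lipschitz:
  assumes a: "is_minimizer a \<eta>" and b: "is_minimizer b \<eta>'"
  shows "norm (a - b) \<le> \<sigma>g / \<sigma>c * norm (\<eta> - \<eta>')"
proof -
  have "lagr a \<eta> + \<sigma>c / 2 * (norm (b - a))^2 \<le> lagr b \<eta>"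
    using a b by (intro minimizer_growth) (auto simp: is_minimizer_def)
  moreover have "lagr b \<eta>' + \<sigma>c / 2 * (norm (a - b))^2 \<le> lagr a \<eta>'"
    using a b by (intro minimizer_growth) (auto simp: is_minimizer_def)
  moreover have "(lagr b \<eta> - lagr b \<eta>') - (lagr a \<eta> - lagr a \<eta>') = (\<eta> - \<eta>') \<bullet> (R *v (b - a))"
    unfolding lagr_diff_multiplier
    by (simp add: matrix_vector_mult_diff_distrib inner_diff_right inner_add_right)
  ultimately have "\<sigma>c * (norm (a - b))^2 \<le> (\<eta> - \<eta>') \<bullet> (R *v (b - a))"
    by (simp add: norm_minus_commute)
  also have "\<dots> \<le> norm (\<eta> - \<eta>') * norm (R *v (b - a))"
    by (rule norm_cauchy_schwarz)
  also have "\<dots> \<le> norm (\<eta> - \<eta>') * (\<sigma>g * norm (a - b))"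
    using norm_R_le[of "b - a"] by (intro mult_left_mono) (auto simp: norm_minus_commute)
  finally have "\<sigma>c * norm (a - b) * norm (a - b) \<le> \<sigma>g * norm (\<eta> - \<eta>') * norm (a - b)"
    by (simp add: power2_eq_square algebra_simps)
  then have "\<sigma>c * norm (a - b) \<le> \<sigma>g * norm (\<eta> - \<eta>')"
    using \<sigma>g_nonneg by (cases "a = b") (auto simp: mult_le_cancel_right)
  then show ?thesis
    using \<sigma>c_pos by (simp add: pos_le_divide_eq algebra_simps)
qed

text \<open>The primal growth \<open>\<sigma>c/2 s\<^sup>2\<close> dominates the coupling \<open>-\<sigma>g s e\<close> up to
  \<open>\<sigma>g\<^sup>2/(2 \<sigma>c) e\<^sup>2\<close> (AM-GM), where \<open>s = \<parallel>z - a\<parallel>\<close> and \<open>e = \<parallel>y - \<nu>\<parallel>\<close>.\<close>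

lemma lagr_lower_bound_near_minimizer:
  assumes a: "is_minimizer a \<nu>" and z: "z \<in> Z"
  shows "lagr a y - \<sigma>g^2 / (2 * \<sigma>c) * (norm (y - \<nu>))^2 \<le> lagr z y"
proof -
  define s where "s = norm (z - a)"
  define e where "e = norm (y - \<nu>)"
  have "lagr z y - lagr a y = (lagr z \<nu> - lagr a \<nu>) + (y - \<nu>) \<bullet> (R *v (z - a))"
    using lagr_diff_multiplier[of z y \<nu>] lagr_diff_multiplier[of a y \<nu>]
    by (simp add: matrix_vector_mult_diff_distrib inner_diff_right inner_add_right)
  moreover have "\<sigma>c / 2 * s^2 \<le> lagr z \<nu> - lagr a \<nu>"
    using minimizer_growth[OF a z] by (simp add: s_def)
  moreover have "- (e * (\<sigma>g * s)) \<le> (y - \<nu>) \<bullet> (R *v (z - a))"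
  proof -
    have "\<bar>(y - \<nu>) \<bullet> (R *v (z - a))\<bar> \<le> e * norm (R *v (z - a))"
      unfolding e_def by (rule Cauchy_Schwarz_ineq2)
    also have "\<dots> \<le> e * (\<sigma>g * s)"
      unfolding s_def e_def by (intro mult_left_mono norm_R_le) auto
    finally show ?thesis by linarith
  qed
  moreover have "- (\<sigma>g^2 / (2 * \<sigma>c) * e^2) \<le> \<sigma>c / 2 * s^2 - e * (\<sigma>g * s)"
  proof -
    have "0 \<le> (\<sigma>c * s - \<sigma>g * e)^2 / (2 * \<sigma>c)" using \<sigma>c_pos by simp
    also have "\<dots> = \<sigma>c / 2 * s^2 - e * (\<sigma>g * s) + \<sigma>g^2 / (2 * \<sigma>c) * e^2"
      using \<sigma>c_pos by (simp add: field_simps power2_eq_square)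
    finally show ?thesis by linarith
  qed
  ultimately show ?thesis unfolding e_def by linarith
qed

lemma dual_fun_bounds:
  assumes a: "is_minimizer a \<nu>"
  shows "lagr a y - \<sigma>g^2 / (2 * \<sigma>c) * (norm (y - \<nu>))^2 \<le> dual_fun y"
    and "dual_fun y \<le> lagr a y"
proof -
  have "a \<in> Z" using a by (simp add: is_minimizer_def)
  then show "lagr a y - \<sigma>g^2 / (2 * \<sigma>c) * (norm (y - \<nu>))^2 \<le> dual_fun y"
    unfolding dual_fun_def
    by (intro cINF_greatest lagr_lower_bound_near_minimizer[OF a]) auto
  show "dual_fun y \<le> lagr a y"
    unfolding dual_fun_def using \<open>a \<in> Z\<close> lagr_lower_bound_near_minimizer[OF a]
    by (auto intro!: cINF_lower bdd_belowI2)
qed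

text \<open>Danskin's theorem: the dual function is squeezed between two quadratics touching at \<open>\<nu>\<close>
  with common slope \<open>dual_grad a \<nu>\<close>.\<close>

lemma has_derivative_dual_fun:
  assumes a: "is_minimizer a \<nu>"
  shows "(dual_fun has_derivative (\<lambda>d. dual_grad a \<nu> \<bullet> d)) (at \<nu>)"
proof (rule has_derivative_at_if_quadratic_remainder)
  show "bounded_linear (\<lambda>d. dual_grad a \<nu> \<bullet> d)" by (rule bounded_linear_inner_right)
  fix y
  define n where "n = (norm (y - \<nu>))^2"
  have "dual_fun \<nu> = lagr a \<nu>"
    using dual_fun_bounds[OF a, of \<nu>] by simp
  moreover have "lagr a y - lagr a \<nu> - dual_grad a \<nu> \<bullet> (y - \<nu>) = - \<phi> / 2 * n"
    unfolding lagr_diff_multiplier n_def power2_norm_eq_inner dual_grad_def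
    by (simp add: inner_diff_left inner_diff_right inner_commute algebra_simps)
  moreover have "0 \<le> \<sigma>g^2 / (2 * \<sigma>c) * n" "0 \<le> \<phi> / 2 * n"
    using \<sigma>c_pos \<phi>_pos by (simp_all add: n_def)
  ultimately show "norm (dual_fun y - dual_fun \<nu> - dual_grad a \<nu> \<bullet> (y - \<nu>))
      \<le> (\<sigma>g^2 / (2 * \<sigma>c) + \<phi> / 2) * (norm (y - \<nu>))^2"
    using dual_fun_bounds[OF a, of y] unfolding n_def[symmetric] real_norm_def
    by (simp add: abs_le_iff algebra_simps)
qed

lemma frechet_derivative_dual_fun:
  "is_minimizer a \<nu> \<Longrightarrow> frechet_derivative dual_fun (at \<nu>) = (\<lambda>d. dual_grad a \<nu> \<bullet> d)"
  by (rule frechet_derivative_at[symmetric]) (rule has_derivative_dual_fun)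

lemma dual_grad_lipschitz:
  assumes a: "is_minimizer a \<nu>" and b: "is_minimizer b \<nu>'"
  shows "norm (dual_grad a \<nu> - dual_grad b \<nu>') \<le> (\<sigma>g^2 / \<sigma>c + \<phi>) * norm (\<nu> - \<nu>')"
proof -
  have "dual_grad a \<nu> - dual_grad b \<nu>' = R *v (a - b) - \<phi> *\<^sub>R (\<nu> - \<nu>')"
    by (simp add: dual_grad_def matrix_vector_mult_diff_distrib algebra_simps)
  then have "norm (dual_grad a \<nu> - dual_grad b \<nu>') \<le> norm (R *v (a - b)) + \<phi> * norm (\<nu> - \<nu>')"
    using norm_triangle_ineq4[of "R *v (a - b)" "\<phi> *\<^sub>R (\<nu> - \<nu>')"] \<phi>_pos by simp
  also have "\<dots> \<le> \<sigma>g * (\<sigma>g / \<sigma>c * norm (\<nu> - \<nu>')) + \<phi> * norm (\<nu> - \<nu>')"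
    using norm_R_le[of "a - b"] mult_left_mono[OF minimizer_lipschitz[OF a b] \<sigma>g_nonneg] by simp
  also have "\<dots> = (\<sigma>g^2 / \<sigma>c + \<phi>) * norm (\<nu> - \<nu>')"
    by (simp add: power2_eq_square algebra_simps)
  finally show ?thesis .
qed

lemma saddle_multiplier_fixed_point:
  assumes "nonneg \<mu>s" and saddle: "\<And>\<nu>. nonneg \<nu> \<Longrightarrow> lagr zs \<nu> \<le> lagr zs \<mu>s" and "0 < \<epsilon>"
  shows "posproj (\<mu>s + \<epsilon> *\<^sub>R dual_grad zs \<mu>s) = \<mu>s"
proof -
  have "\<mu>s = posproj ((1 / \<phi>) *\<^sub>R (R *v zs + g0))"
  proof (rule nonneg_maximizer_eq_posproj[OF \<phi>_pos \<open>nonneg \<mu>s\<close>])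
    fix \<nu> :: "real^'m" assume "nonneg \<nu>"
    then show "\<nu> \<bullet> (R *v zs + g0) - \<phi> / 2 * (norm \<nu>)^2 \<le> \<mu>s \<bullet> (R *v zs + g0) - \<phi> / 2 * (norm \<mu>s)^2"
      using saddle[of \<nu>] lagr_diff_multiplier[of zs \<nu> \<mu>s] by (simp add: inner_diff_left algebra_simps)
  qed
  then show ?thesis
    unfolding dual_grad_def by (rule posproj_gradient_step_fixed_point[OF \<phi>_pos \<open>0 < \<epsilon>\<close>])
qed

theorem dual_gradient_method_converges:
  fixes \<mu> :: "nat \<Rightarrow> real^'m" and z :: "nat \<Rightarrow> real^'n"
  assumes saddle: "is_minimizer zs \<mu>s" "nonneg \<mu>s" "\<And>\<nu>. nonneg \<nu> \<Longrightarrow> lagr zs \<nu> \<le> lagr zs \<mu>s"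
    and strongly_monotone: "\<And>\<nu> \<nu>' a b. nonneg \<nu> \<Longrightarrow> nonneg \<nu>' \<Longrightarrow>
        is_minimizer a \<nu> \<Longrightarrow> is_minimizer b \<nu>' \<Longrightarrow>
        (dual_grad a \<nu> - dual_grad b \<nu>') \<bullet> (\<nu> - \<nu>') \<le> - \<sigma>h * (norm (\<nu> - \<nu>'))^2"
    and init: "nonneg (\<mu> 1)"
    and z_step: "\<And>k. k \<ge> 1 \<Longrightarrow> is_minimizer (z (k + 1)) (\<mu> k)"
    and \<mu>_step: "\<And>k. k \<ge> 1 \<Longrightarrow> \<mu> (k + 1) = posproj (\<mu> k + \<epsilon> *\<^sub>R dual_grad (z (k + 1)) (\<mu> k))"
    and \<epsilon>_pos: "0 < \<epsilon>" and \<epsilon>_bound: "\<epsilon> < 2 * \<sigma>h / (\<sigma>g^2 / \<sigma>c + \<phi>)^2"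
  shows "(\<lambda>k. (norm (\<mu> k - \<mu>s))^2) \<longlonglongrightarrow> 0 \<and> (\<lambda>k. (norm (z k - zs))^2) \<longlonglongrightarrow> 0"
proof
  define Lc where "Lc = \<sigma>g^2 / \<sigma>c + \<phi>"
  have "0 < Lc" using \<sigma>c_pos \<phi>_pos by (simp add: Lc_def add_nonneg_pos)
  have \<mu>_nonneg: "nonneg (\<mu> k)" if "k \<ge> 1" for k
    using that
  proof (induction k rule: dec_induct)
    case (step n)
    then show ?case using \<mu>_step[of n] by (simp add: nonneg_posproj)
  qed (rule init)
  have contraction: "(norm (\<mu> (Suc k) - \<mu>s))^2 \<le> (1 - 2 * \<epsilon> * \<sigma>h + \<epsilon>^2 * Lc^2) * (norm (\<mu> k - \<mu>s))^2"
    if "k \<ge> 1" for k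
    unfolding Suc_eq_plus1 \<mu>_step[OF that] Lc_def
  proof (rule posproj_gradient_step_contraction)
    show "posproj (\<mu>s + \<epsilon> *\<^sub>R dual_grad zs \<mu>s) = \<mu>s"
      using saddle(2,3) \<epsilon>_pos by (rule saddle_multiplier_fixed_point)
    show "(dual_grad (z (k + 1)) (\<mu> k) - dual_grad zs \<mu>s) \<bullet> (\<mu> k - \<mu>s)
        \<le> - \<sigma>h * (norm (\<mu> k - \<mu>s))^2"
      using \<mu>_nonneg[OF that] saddle(2) z_step[OF that] saddle(1) by (rule strongly_monotone)
    show "norm (dual_grad (z (k + 1)) (\<mu> k) - dual_grad zs \<mu>s) \<le> (\<sigma>g^2 / \<sigma>c + \<phi>) * norm (\<mu> k - \<mu>s)"
      using z_step[OF that] saddle(1) by (rule dual_grad_lipschitz)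
  qed (use \<epsilon>_pos in simp)
  have "\<epsilon> * Lc^2 < 2 * \<sigma>h"
    using \<epsilon>_bound \<open>0 < Lc\<close> by (simp add: Lc_def pos_less_divide_eq)
  then have "1 - 2 * \<epsilon> * \<sigma>h + \<epsilon>^2 * Lc^2 < 1"
    using \<epsilon>_pos by (simp add: power2_eq_square algebra_simps)
  with contraction show \<mu>_lim: "(\<lambda>k. (norm (\<mu> k - \<mu>s))^2) \<longlonglongrightarrow> 0"
    by (intro LIMSEQ_zero_if_contracting) auto
  have z_close: "(norm (z (Suc k) - zs))^2 \<le> (\<sigma>g / \<sigma>c)^2 * (norm (\<mu> k - \<mu>s))^2" if "k \<ge> 1" for k
    using minimizer_lipschitz[OF z_step[OF that] saddle(1)]
    by (simp add: power_mult_distrib[symmetric] power_mono)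
  have "(\<lambda>k. (norm (z (Suc k) - zs))^2) \<longlonglongrightarrow> 0"
  proof (rule tendsto_sandwich[OF _ _ tendsto_const])
    show "\<forall>\<^sub>F k in sequentially. (norm (z (Suc k) - zs))^2 \<le> (\<sigma>g / \<sigma>c)^2 * (norm (\<mu> k - \<mu>s))^2"
      using z_close by (auto intro: eventually_sequentiallyI)
    show "(\<lambda>k. (\<sigma>g / \<sigma>c)^2 * (norm (\<mu> k - \<mu>s))^2) \<longlonglongrightarrow> 0"
      using \<mu>_lim by (rule tendsto_mult_right_zero)
  qed auto
  then show "(\<lambda>k. (norm (z k - zs))^2) \<longlonglongrightarrow> 0"
    by (rule LIMSEQ_imp_Suc)
qed

end

theorem corollary1:
  fixes blk :: "'n::finite \<Rightarrow> 'b::finite"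
    and Zb :: "'b \<Rightarrow> (real^'n) set"
    and C :: "'b \<Rightarrow> real^'n \<Rightarrow> real"
    and G :: "'b \<Rightarrow> real^'n \<Rightarrow> real^'n"
    and Hs :: "'b \<Rightarrow> real^'n \<Rightarrow> real^'n \<Rightarrow> real^'n"
    and R :: "real^'n^'m::finite" and g0 :: "real^'m"
    and \<sigma>c \<sigma>g \<sigma>h \<phi> \<epsilon> :: real
    and zs :: "real^'n" and \<mu>s :: "real^'m"
    and z :: "nat \<Rightarrow> real^'n" and \<mu> :: "nat \<Rightarrow> real^'m"
  defines "Z \<equiv> prodset blk Zb"
    and "L \<equiv> Lagr C blk R g0 \<phi>"
  assumes Zb_sub: "\<And>i. Zb i \<subseteq> blockspace blk i"
    and Zb_ne: "\<And>i. Zb i \<noteq> {}"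
    and Zb_convex: "\<And>i. convex (Zb i)"
    and Zb_compact: "\<And>i. compact (Zb i)"
    and \<sigma>c_pos: "\<sigma>c > 0"
    and grad_in: "\<And>i x. x \<in> Zb i \<Longrightarrow> G i x \<in> blockspace blk i"
    and grad: "\<And>i x. x \<in> Zb i \<Longrightarrow> (C i has_derivative (\<lambda>h. G i x \<bullet> h)) (at x within Zb i)"
    and hess: "\<And>i x. x \<in> Zb i \<Longrightarrow> (G i has_derivative Hs i x) (at x within Zb i)"
    and hess_lb: "\<And>i x h. x \<in> Zb i \<Longrightarrow> h \<in> blockspace blk i \<Longrightarrow>
                     h \<bullet> Hs i x h \<ge> \<sigma>c * (norm h)^2"
    and grad_lip: "\<And>i. \<exists>Lc. \<forall>x\<in>Zb i. \<forall>y\<in>Zb i. norm (G i x - G i y) \<le> Lc * norm (x - y)"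
    and \<sigma>g_pos: "\<sigma>g > 0"
    and R_bound: "frob_norm R \<le> \<sigma>g"
    and slater: "\<exists>z0\<in>Z. \<forall>j. (R *v z0 + g0) $ j < 0"
    and \<phi>_pos: "\<phi> > 0"
    and saddle: "zs \<in> Z" "nonneg \<mu>s"
       "\<And>zz \<nu>. zz \<in> Z \<Longrightarrow> nonneg \<nu> \<Longrightarrow> L zs \<nu> \<le> L zs \<mu>s \<and> L zs \<mu>s \<le> L zz \<mu>s"
    and \<sigma>h_pos: "\<sigma>h > 0"
    and \<sigma>h: "\<And>\<nu> \<nu>'. nonneg \<nu> \<Longrightarrow> nonneg \<nu>' \<Longrightarrow>
        frechet_derivative (\<lambda>\<eta>. INF zz\<in>Z. L zz \<eta>) (at \<nu>) (\<nu> - \<nu>')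
      - frechet_derivative (\<lambda>\<eta>. INF zz\<in>Z. L zz \<eta>) (at \<nu>') (\<nu> - \<nu>')
      \<le> - \<sigma>h * (norm (\<nu> - \<nu>'))^2"
    and init: "nonneg (\<mu> 1)"
    and z_step: "\<And>k. k \<ge> 1 \<Longrightarrow> z (k + 1) \<in> Z \<and> (\<forall>zz\<in>Z. L (z (k + 1)) (\<mu> k) \<le> L zz (\<mu> k))"
    and \<mu>_step: "\<And>k. k \<ge> 1 \<Longrightarrow>
        \<mu> (k + 1) = posproj (\<mu> k + \<epsilon> *\<^sub>R ((R *v z (k + 1) + g0) - \<phi> *\<^sub>R \<mu> k))"
    and \<epsilon>_pos: "0 < \<epsilon>"
    and \<epsilon>_bound: "\<epsilon> < 2 * \<sigma>h / (\<sigma>g^2 / \<sigma>c + \<phi>)^2"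
  shows "(\<lambda>k. (norm (\<mu> k - \<mu>s))^2) \<longlonglongrightarrow> 0 \<and>
         (\<lambda>k. (norm (z k - zs))^2) \<longlonglongrightarrow> 0"
proof -
  (* Nonemptiness, compactness, Slater's condition and the Lipschitz gradients only serve to
     guarantee that the saddle point and the iterates exist, which is assumed here. *)
  define F where "F = (\<lambda>z. \<Sum>i\<in>UNIV. C i (blockproj blk i z))"
  have C_strongly_convex: "strongly_convex_on (Zb i) \<sigma>c (C i)" for i
  proof (rule hessian_lower_bound_imp_strongly_convex_on[OF Zb_convex grad hess])
    fix p x y assume "p \<in> Zb i" "x \<in> Zb i" "y \<in> Zb i"
    then have "y - x \<in> blockspace blk i"
      using Zb_sub by (blast intro: blockspace_diff)
    with \<open>p \<in> Zb i\<close> show "\<sigma>c * (norm (y - x))^2 \<le> (y - x) \<bullet> Hs i p (y - x)"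
      by (rule hess_lb)
  qed
  interpret regularized_lagrangian F Z R g0 \<phi> \<sigma>c \<sigma>g
  proof
    show "convex Z"
      unfolding Z_def by (rule convex_prodset[OF Zb_convex])
    show "strongly_convex_on Z \<sigma>c F"
      unfolding Z_def F_def by (rule strongly_convex_on_prodset_sum[OF C_strongly_convex])
    show "norm (R *v w) \<le> \<sigma>g * norm w" for w
      using norm_matrix_vector_mult_le_frob_norm[of R w] R_bound
      by (meson mult_right_mono norm_ge_zero order_trans)
  qed (use \<sigma>c_pos \<phi>_pos in auto)
  have L_eq: "L = lagr"
    by (simp add: fun_eq_iff L_def Lagr_def lagr_def) (simp add: F_def)
  have dual_fun_eq: "(\<lambda>\<eta>. INF zz\<in>Z. L zz \<eta>) = dual_fun"
    by (simp add: fun_eq_iff L_eq dual_fun_def)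
  show ?thesis
  proof (rule dual_gradient_method_converges)
    show "(dual_grad a \<nu> - dual_grad b \<nu>') \<bullet> (\<nu> - \<nu>') \<le> - \<sigma>h * (norm (\<nu> - \<nu>'))^2"
      if "nonneg \<nu>" "nonneg \<nu>'" "is_minimizer a \<nu>" "is_minimizer b \<nu>'" for \<nu> \<nu>' a b
      using \<sigma>h[OF that(1,2)]
      unfolding dual_fun_eq frechet_derivative_dual_fun[OF that(3)] frechet_derivative_dual_fun[OF that(4)]
      by (simp add: inner_diff_left)
  qed (use saddle z_step \<mu>_step init \<epsilon>_pos \<epsilon>_bound in
       \<open>auto simp: is_minimizer_def L_eq dual_grad_def\<close>)
qed

end
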